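(* Let $D$ be a nondegenerate dendrite with a compatible metric $d$ and let $f\colon D\to D$ be continuous such that $\liminf_{n\to\infty} d(f^n(S_1),f^n(S_2))=0$ for all nondegenerate subdendrites $S_1,S_2$ of $D$. Then the intersection of any nonempty family of nondegenerate subdendrites $S$ of $D$ with $f(S)\subseteq S$ is an $f$-invariant (possibly degenerate) subdendrite of $D$, and hence contains a fixed point of $f$.
   Context: A dendrite is a locally connected continuum containing no simple closed curve; a subdendrite is a subcontinuum. $d(A,B)=\inf\{d(a,b): a\in A, b\in B\}$. A set $S$ is $f$-invariant if $f(S)\subseteq S$. *)

theory Defs
  imports "HOL-Analysis.Analysis" "HOL-Library.Liminf_Limsup"
begin

definition continuum :: "'a::topological_space set \<Rightarrow> bool" where
  "continuum S \<longleftrightarrow> S \<noteq> {} \<and> compact S \<and> connected S"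

definition nondegenerate :: "'a set \<Rightarrow> bool" where
  "nondegenerate S \<longleftrightarrow> (\<exists>x\<in>S. \<exists>y\<in>S. x \<noteq> y)"

definition simple_closed_curve :: "'a::topological_space set \<Rightarrow> bool" where
  "simple_closed_curve C \<longleftrightarrow> C homeomorphic sphere (0::complex) 1"

definition dendrite :: "'a::metric_space set \<Rightarrow> bool" where
  "dendrite D \<longleftrightarrow> continuum D \<and> locally connected D \<and>
     \<not> (\<exists>C. C \<subseteq> D \<and> simple_closed_curve C)"

definition subdendrite :: "'a::metric_space set \<Rightarrow> 'a set \<Rightarrow> bool" where
  "subdendrite D S \<longleftrightarrow> S \<subseteq> D \<and> continuum S"

end

theory Submission
  imports Defs
begin

(* Two nondegenerate f-invariant subcontinua S1, S2 of D must meet: otherwise the iterates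
   f^n(S1) and f^n(S2) stay inside S1 and S2, so their distance never drops below
   setdist S1 S2 > 0. Subcontinua of a dendrite are convex for its unique arcs, and convex
   subsets of a dendrite have the Helly property (any three pairwise meeting ones have a
   common point, as the three arcs between three points share a point). By compactness the
   whole family therefore has a nonempty intersection, which is again convex, hence a
   subcontinuum, and clearly invariant. It contains a fixed point because closed convex
   subsets K of a dendrite have the fixed point property: fix a in K and order K by
   "x lies on the arc from a to y"; among the points x lying on the arc from a to f x a
   maximal one exists by Zorn's lemma and compactness, and a non-fixed such point could be
   pushed further along the arc towards its image.
   The arc structure of a dendrite rests on the fact that compact, connected, locally
   connected metric spaces are arcwise connected: after an isometric embedding into a Banach
   space, arcs arise as uniform limits of successively refined polygonal paths. *)

section \<open>An isometric embedding into a Banach space\<close>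

instance bcontfun :: (metric_space, banach) banach ..

text \<open>Kuratowski's embedding; the base point \<^term>\<open>undefined\<close> is an arbitrary fixed point.\<close>

definition kuratowski :: "'a::metric_space \<Rightarrow> ('a \<Rightarrow>\<^sub>C real)" where
  "kuratowski x = Bcontfun (\<lambda>z. dist x z - dist undefined z)"

lemma kuratowski_apply: "apply_bcontfun (kuratowski x) z = dist x z - dist undefined z"
proof -
  have "(\<lambda>z. dist x z - dist undefined z) \<in> bcontfun"
  proof (rule bcontfun_normI)
    show "continuous_on UNIV (\<lambda>z. dist x z - dist undefined z)"
      by (intro continuous_intros)
    show "norm (dist x z - dist undefined z) \<le> dist x undefined" for z
      using dist_triangle3[of x z undefined] dist_triangle3[of undefined z x]
      by (auto simp: dist_commute)
  qed
  then show ?thesis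
    by (simp add: kuratowski_def Bcontfun_inverse)
qed

lemma dist_kuratowski [simp]: "dist (kuratowski x) (kuratowski y) = dist x y"
proof (rule antisym)
  show "dist (kuratowski x) (kuratowski y) \<le> dist x y"
  proof (rule dist_bound)
    fix z
    show "dist (apply_bcontfun (kuratowski x) z) (apply_bcontfun (kuratowski y) z) \<le> dist x y"
      unfolding kuratowski_apply dist_real_def
      using dist_triangle3[of x z y] dist_triangle3[of y z x]
      by (auto simp: dist_commute)
  qed
  have "dist (apply_bcontfun (kuratowski x) x) (apply_bcontfun (kuratowski y) x)
          \<le> dist (kuratowski x) (kuratowski y)"
    by (rule dist_bounded)
  then show "dist x y \<le> dist (kuratowski x) (kuratowski y)"
    unfolding kuratowski_apply dist_real_def by (simp add: dist_commute)
qed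

lemma inj_kuratowski: "inj kuratowski"
  by (metis dist_kuratowski dist_eq_0_iff injI)

lemma continuous_on_kuratowski: "continuous_on S kuratowski"
  unfolding continuous_on_iff by (metis dist_kuratowski)

lemma continuous_on_inv_kuratowski:
  assumes "S \<subseteq> range kuratowski"
  shows "continuous_on S (inv kuratowski)"
proof -
  have "dist (inv kuratowski u) (inv kuratowski v) = dist u v" if uv: "u \<in> S" "v \<in> S" for u v
  proof -
    obtain a b where "u = kuratowski a" "v = kuratowski b"
      using assms uv by blast
    then show ?thesis
      by (simp add: inv_f_f[OF inj_kuratowski])
  qed
  then show ?thesis
    unfolding continuous_on_iff by metis
qed

section \<open>Compact locally connected metric spaces are arcwise connected\<close>

lemma locally_connected_small_nbhd:
  assumes "locally connected D" "y \<in> D" "\<rho> > 0"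
  obtains V where "open V" "y \<in> V" "connected (D \<inter> V)" "D \<inter> V \<subseteq> ball y \<rho>"
proof -
  have "openin (top_of_set D) (D \<inter> ball y \<rho>)" "y \<in> D \<inter> ball y \<rho>"
    using assms by (auto simp: openin_open_Int)
  then obtain u where u: "openin (top_of_set D) u" "connected u" "y \<in> u" "u \<subseteq> D \<inter> ball y \<rho>"
    using assms(1) unfolding locally_connected by meson
  then obtain V where "open V" "u = D \<inter> V"
    by (meson openin_open)
  then show ?thesis
    using u that by auto
qed

definition uniformly_locally_connected :: "'a::metric_space set \<Rightarrow> bool" where
  "uniformly_locally_connected X \<longleftrightarrow> (\<forall>e>0. \<exists>d>0. \<forall>y\<in>X. \<forall>z\<in>X. dist y z < d \<longrightarrow>
      (\<exists>C. connected C \<and> C \<subseteq> X \<and> y \<in> C \<and> z \<in> C \<and> C \<subseteq> ball y e))"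

lemma uniformly_locally_connectedD:
  "uniformly_locally_connected X \<Longrightarrow> e > 0 \<Longrightarrow> \<exists>d>0. \<forall>y\<in>X. \<forall>z\<in>X. dist y z < d \<longrightarrow>
    (\<exists>C. connected C \<and> C \<subseteq> X \<and> y \<in> C \<and> z \<in> C \<and> C \<subseteq> ball y e)"
  unfolding uniformly_locally_connected_def by blast

lemma compact_locally_connected_imp_uniformly_locally_connected:
  fixes X :: "'a::metric_space set"
  assumes "compact X" "locally connected X"
  shows "uniformly_locally_connected X"
  unfolding uniformly_locally_connected_def
proof (intro allI impI)
  fix e :: real assume "e > 0"
  have "\<exists>V. open V \<and> x \<in> V \<and> connected (X \<inter> V) \<and> X \<inter> V \<subseteq> ball x (e/2)" if x: "x \<in> X" for x
  proof -
    obtain V where "open V" "x \<in> V" "connected (X \<inter> V)" "X \<inter> V \<subseteq> ball x (e/2)"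
      using locally_connected_small_nbhd[OF assms(2) x half_gt_zero[OF \<open>e > 0\<close>]] by blast
    then show ?thesis
      by blast
  qed
  then obtain V where V: "\<And>x. x \<in> X \<Longrightarrow>
      open (V x) \<and> x \<in> V x \<and> connected (X \<inter> V x) \<and> X \<inter> V x \<subseteq> ball x (e/2)"
    by metis
  have "X \<subseteq> \<Union> (V ` X)"
    using V by blast
  then obtain d where d: "0 < d" "\<And>x. x \<in> X \<Longrightarrow> \<exists>G \<in> V ` X. ball x d \<subseteq> G"
    using Heine_Borel_lemma[OF assms(1)] V by (metis imageE)
  show "\<exists>d>0. \<forall>y\<in>X. \<forall>z\<in>X. dist y z < d \<longrightarrow>
      (\<exists>C. connected C \<and> C \<subseteq> X \<and> y \<in> C \<and> z \<in> C \<and> C \<subseteq> ball y e)"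
  proof (intro exI[of _ d] conjI ballI impI)
    fix y z assume yz: "y \<in> X" "z \<in> X" "dist y z < d"
    then obtain x where x: "x \<in> X" "ball y d \<subseteq> V x"
      using d by blast
    have yV: "y \<in> X \<inter> V x" and "z \<in> X \<inter> V x"
      using x yz d(1) by auto
    moreover have "X \<inter> V x \<subseteq> ball y e"
    proof
      fix w assume "w \<in> X \<inter> V x"
      then have "dist x w < e/2" "dist x y < e/2"
        using V[OF x(1)] yV by auto
      then show "w \<in> ball y e"
        using dist_triangle3[of y w x] by (simp add: dist_commute)
    qed
    ultimately show "\<exists>C. connected C \<and> C \<subseteq> X \<and> y \<in> C \<and> z \<in> C \<and> C \<subseteq> ball y e"
      using V[OF x(1)] by (intro exI[of _ "X \<inter> V x"]) auto
  qed (rule d(1))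
qed

lemma connected_imp_dist_chain:
  fixes C :: "'a::metric_space set"
  assumes "connected C" "y \<in> C" "z \<in> C" "d > 0"
  obtains ws where "length ws \<ge> 2" "hd ws = y" "last ws = z" "set ws \<subseteq> C"
    "successively (\<lambda>a b. dist a b < d) ws"
proof -
  define R where "R a b \<longleftrightarrow> (\<exists>ws. ws \<noteq> [] \<and> hd ws = a \<and> last ws = b \<and> set ws \<subseteq> C \<and>
      successively (\<lambda>a b. dist a b < d) ws)" for a b
  have "R y z"
  proof (rule connected_equivalence_relation[OF assms(1-3), of R])
    show "R b a" if "R a b" for a b
    proof -
      obtain ws where ws: "ws \<noteq> []" "hd ws = a" "last ws = b" "set ws \<subseteq> C"
          "successively (\<lambda>a b. dist a b < d) ws"
        using \<open>R a b\<close> R_def by blast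
      show ?thesis
        unfolding R_def using ws
        by (intro exI[of _ "rev ws"]) (auto simp: successively_rev hd_rev last_rev dist_commute)
    qed
    show "R a c" if "R a b" "R b c" for a b c
    proof -
      obtain ws where ws: "ws \<noteq> []" "hd ws = a" "last ws = b" "set ws \<subseteq> C"
          "successively (\<lambda>a b. dist a b < d) ws"
        using \<open>R a b\<close> R_def by blast
      obtain vs where vs: "vs \<noteq> []" "hd vs = b" "last vs = c" "set vs \<subseteq> C"
          "successively (\<lambda>a b. dist a b < d) vs"
        using \<open>R b c\<close> R_def by blast
      show ?thesis
        unfolding R_def using ws vs \<open>d > 0\<close>
        by (intro exI[of _ "ws @ vs"]) (auto simp: successively_append_iff)
    qed
    show "\<exists>T. openin (top_of_set C) T \<and> a \<in> T \<and> (\<forall>x\<in>T. R a x)" if "a \<in> C" for a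
    proof (intro exI conjI)
      show "openin (top_of_set C) (C \<inter> ball a d)"
        by (simp add: openin_open_Int)
      show "a \<in> C \<inter> ball a d"
        using that \<open>d > 0\<close> by simp
      show "\<forall>x\<in>C \<inter> ball a d. R a x"
        unfolding R_def using that by (intro ballI, rule_tac x="[a, x]" in exI) auto
    qed
  qed
  then obtain ws where ws: "ws \<noteq> []" "hd ws = y" "last ws = z" "set ws \<subseteq> C"
      "successively (\<lambda>a b. dist a b < d) ws"
    using R_def by blast
  show ?thesis
    using ws \<open>d > 0\<close> assms(2)
    by (cases ws) (auto intro!: that[of "y # ws"] simp: Suc_le_eq)
qed

fun joinpaths_list :: "('b \<Rightarrow> 'b \<Rightarrow> real \<Rightarrow> 'b::topological_space) \<Rightarrow> 'b list \<Rightarrow> real \<Rightarrow> 'b" where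
  "joinpaths_list P [] = (\<lambda>t. undefined)"
| "joinpaths_list P [a] = (\<lambda>t. a)"
| "joinpaths_list P [a, b] = P a b"
| "joinpaths_list P (a # b # c # r) = P a b +++ joinpaths_list P (b # c # r)"

lemma path_joinpaths_list:
  assumes "successively R ws" "length ws \<ge> 2"
    and "\<And>a b. R a b \<Longrightarrow> path (P a b) \<and> pathstart (P a b) = a \<and> pathfinish (P a b) = b"
  shows "path (joinpaths_list P ws) \<and> pathstart (joinpaths_list P ws) = hd ws \<and>
    pathfinish (joinpaths_list P ws) = last ws"
  using assms by (induction P ws rule: joinpaths_list.induct) auto

lemma joinpaths_list_pointwise:
  assumes "successively R ws" "length ws \<ge> 2" "set ws \<subseteq> S"
    and "\<And>a b t. R a b \<Longrightarrow> a \<in> S \<Longrightarrow> b \<in> S \<Longrightarrow> t \<in> {0..1} \<Longrightarrow> Q (P1 a b t) (P2 a b t)"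
    and "t \<in> {0..1}"
  shows "Q (joinpaths_list P1 ws t) (joinpaths_list P2 ws t)"
  using assms
proof (induction ws arbitrary: t rule: induct_list012)
  case (3 a b r)
  show ?case
  proof (cases r)
    case Nil
    then show ?thesis using 3 by auto
  next
    case (Cons c r')
    have eq1: "joinpaths_list P1 (a # b # r) = P1 a b +++ joinpaths_list P1 (b # r)"
     and eq2: "joinpaths_list P2 (a # b # r) = P2 a b +++ joinpaths_list P2 (b # r)"
      using Cons by auto
    show ?thesis
    proof (cases "t \<le> 1/2")
      case True
      then show ?thesis unfolding eq1 eq2 joinpaths_def using 3 by auto
    next
      case False
      have "Q (joinpaths_list P1 (b # r) (2*t-1)) (joinpaths_list P2 (b # r) (2*t-1))"
      proof (rule "3.IH"(2))
        show "successively R (b # r)" using "3.prems"(1) by simp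
        show "2 \<le> length (b # r)" using Cons by simp
        show "set (b # r) \<subseteq> S" using "3.prems"(3) by simp
        show "2 * t - 1 \<in> {0..1}" using False "3.prems"(5) by auto
      qed (use "3.prems"(4) in auto)
      then show ?thesis unfolding eq1 eq2 joinpaths_def using False by auto
    qed
  qed
qed auto

lemma dist_linepath_start:
  fixes y z :: "'b::real_normed_vector"
  assumes "t \<in> {0..1}"
  shows "dist (linepath y z t) y \<le> dist y z"
proof -
  have "linepath y z t - y = t *\<^sub>R (z - y)"
    by (simp add: linepath_def algebra_simps)
  then have "dist (linepath y z t) y = \<bar>t\<bar> * norm (z - y)"
    by (simp add: dist_norm)
  also have "\<dots> \<le> norm (z - y)"
    using assms by (simp add: mult_left_le_one_le)
  finally show ?thesis
    by (simp add: dist_norm norm_minus_commute)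
qed

text \<open>
  \<open>refined_path ch m n y z\<close> starts from the segment from \<open>y\<close> to \<open>z\<close> and, \<open>m\<close> times over,
  replaces each segment between close points by the polygon through the chain that
  \<open>ch\<close> provides between them; the chains get finer at every level \<open>n\<close>.
\<close>

fun refined_path :: "(nat \<Rightarrow> 'b \<Rightarrow> 'b \<Rightarrow> 'b list) \<Rightarrow> nat \<Rightarrow> nat \<Rightarrow> 'b \<Rightarrow> 'b \<Rightarrow> real \<Rightarrow> 'b::real_normed_vector"
  where
  "refined_path ch 0 n y z = linepath y z"
| "refined_path ch (Suc m) n y z = joinpaths_list (refined_path ch m (Suc n)) (ch n y z)"

locale chain_refinement =
  fixes Y :: "'b::real_normed_vector set" and ch :: "nat \<Rightarrow> 'b \<Rightarrow> 'b \<Rightarrow> 'b list"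
    and \<delta> \<epsilon> :: "nat \<Rightarrow> real"
  assumes chain: "\<And>n y z. y \<in> Y \<Longrightarrow> z \<in> Y \<Longrightarrow> dist y z < \<delta> n \<Longrightarrow>
      length (ch n y z) \<ge> 2 \<and> hd (ch n y z) = y \<and> last (ch n y z) = z \<and>
      set (ch n y z) \<subseteq> Y \<inter> ball y (\<epsilon> n) \<and>
      successively (\<lambda>a b. a \<in> Y \<and> b \<in> Y \<and> dist a b < \<delta> (Suc n)) (ch n y z)"
    and delta_le_epsilon: "\<And>n. \<delta> n \<le> \<epsilon> n"
begin

lemma path_refined_path:
  "y \<in> Y \<Longrightarrow> z \<in> Y \<Longrightarrow> dist y z < \<delta> n \<Longrightarrow>
   path (refined_path ch m n y z) \<and> pathstart (refined_path ch m n y z) = y \<and>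
   pathfinish (refined_path ch m n y z) = z"
proof (induction m arbitrary: n y z)
  case (Suc m)
  note c = chain[OF Suc.prems]
  have "path (joinpaths_list (refined_path ch m (Suc n)) (ch n y z)) \<and>
      pathstart (joinpaths_list (refined_path ch m (Suc n)) (ch n y z)) = hd (ch n y z) \<and>
      pathfinish (joinpaths_list (refined_path ch m (Suc n)) (ch n y z)) = last (ch n y z)"
    by (rule path_joinpaths_list[of "\<lambda>a b. a \<in> Y \<and> b \<in> Y \<and> dist a b < \<delta> (Suc n)"])
       (use c Suc.IH in auto)
  then show ?case
    using c by simp
qed simp

lemma refined_path_near:
  "y \<in> Y \<Longrightarrow> z \<in> Y \<Longrightarrow> dist y z < \<delta> n \<Longrightarrow> t \<in> {0..1} \<Longrightarrow>
   \<exists>x\<in>Y. dist (refined_path ch m n y z t) x < \<delta> (n + m)"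
proof (induction m arbitrary: n y z t)
  case 0
  then show ?case
    using dist_linepath_start[of t y z] by force
next
  case (Suc m)
  note c = chain[OF Suc.prems(1-3)]
  have "(\<lambda>p q. \<exists>x\<in>Y. dist p x < \<delta> (Suc n + m))
      (joinpaths_list (refined_path ch m (Suc n)) (ch n y z) t)
      (joinpaths_list (refined_path ch m (Suc n)) (ch n y z) t)"
  proof (rule joinpaths_list_pointwise[of "\<lambda>a b. a \<in> Y \<and> b \<in> Y \<and> dist a b < \<delta> (Suc n)" _ Y])
    fix a b t' assume "a \<in> Y \<and> b \<in> Y \<and> dist a b < \<delta> (Suc n)" "t' \<in> {0..1::real}"
    then show "\<exists>x\<in>Y. dist (refined_path ch m (Suc n) a b t') x < \<delta> (Suc n + m)"
      using Suc.IH[of a b "Suc n" t'] by auto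
  qed (use c Suc in auto)
  then show ?case
    by simp
qed

lemma refined_path_step:
  "y \<in> Y \<Longrightarrow> z \<in> Y \<Longrightarrow> dist y z < \<delta> n \<Longrightarrow> t \<in> {0..1} \<Longrightarrow>
   dist (refined_path ch (Suc m) n y z t) (refined_path ch m n y z t) \<le> 2 * \<epsilon> (n + m)"
proof (induction m arbitrary: n y z t)
  case 0
  note c = chain[OF "0.prems"(1-3)]
  have "(\<lambda>p q. p \<in> ball y (\<epsilon> n))
      (joinpaths_list (refined_path ch 0 (Suc n)) (ch n y z) t)
      (joinpaths_list (refined_path ch 0 (Suc n)) (ch n y z) t)"
  proof (rule joinpaths_list_pointwise[of "\<lambda>a b. a \<in> Y \<and> b \<in> Y \<and> dist a b < \<delta> (Suc n)" _
        "Y \<inter> ball y (\<epsilon> n)"])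
    fix a b t' assume "a \<in> Y \<inter> ball y (\<epsilon> n)" "b \<in> Y \<inter> ball y (\<epsilon> n)" "t' \<in> {0..1::real}"
    then show "refined_path ch 0 (Suc n) a b t' \<in> ball y (\<epsilon> n)"
      using linepath_in_path[of t' a b] closed_segment_subset[of a "ball y (\<epsilon> n)" b] by auto
  qed (use c "0.prems" in auto)
  then have "dist y (refined_path ch 1 n y z t) < \<epsilon> n"
    by simp
  moreover have "dist (refined_path ch 0 n y z t) y < \<epsilon> n"
    using dist_linepath_start[OF "0.prems"(4), of y z] "0.prems"(3) delta_le_epsilon[of n] by simp
  ultimately show ?case
    using dist_triangle[of "refined_path ch 1 n y z t" "refined_path ch 0 n y z t" y]
    by (simp add: dist_commute)
next
  case (Suc m)
  note c = chain[OF Suc.prems(1-3)]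
  have "(\<lambda>p q. dist p q \<le> 2 * \<epsilon> (Suc n + m))
      (joinpaths_list (refined_path ch (Suc m) (Suc n)) (ch n y z) t)
      (joinpaths_list (refined_path ch m (Suc n)) (ch n y z) t)"
  proof (rule joinpaths_list_pointwise[of "\<lambda>a b. a \<in> Y \<and> b \<in> Y \<and> dist a b < \<delta> (Suc n)" _ Y])
    fix a b t' assume "a \<in> Y \<and> b \<in> Y \<and> dist a b < \<delta> (Suc n)" "t' \<in> {0..1::real}"
    then show "dist (refined_path ch (Suc m) (Suc n) a b t') (refined_path ch m (Suc n) a b t')
        \<le> 2 * \<epsilon> (Suc n + m)"
      using Suc.IH[of a b "Suc n" t'] by auto
  qed (use c Suc in auto)
  then show ?case
    by simp
qed

lemma dist_refined_path_linepath:
  "y \<in> Y \<Longrightarrow> z \<in> Y \<Longrightarrow> dist y z < \<delta> n \<Longrightarrow> t \<in> {0..1} \<Longrightarrow>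
   dist (refined_path ch m n y z t) (linepath y z t) \<le> (\<Sum>j<m. 2 * \<epsilon> (n + j))"
proof (induction m)
  case (Suc m)
  then show ?case
    using refined_path_step[OF Suc.prems, of m]
      dist_triangle[of "refined_path ch (Suc m) n y z t" "linepath y z t" "refined_path ch m n y z t"]
    by simp
qed simp

end

lemma path_limit_of_summable_steps:
  fixes g :: "nat \<Rightarrow> real \<Rightarrow> 'b::banach"
  assumes paths: "\<And>m. path (g m)" and "summable c"
    and steps: "\<And>i t. t \<in> {0..1} \<Longrightarrow> dist (g (Suc i) t) (g i t) \<le> c i"
  obtains L where "path L" "\<And>t. t \<in> {0..1} \<Longrightarrow> (\<lambda>m. g m t) \<longlonglongrightarrow> L t"
proof -
  define h where "h i t = g (Suc i) t - g i t" for i t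
  have ul: "uniform_limit {0..1} (\<lambda>m t. \<Sum>i<m. h i t) (\<lambda>t. \<Sum>i. h i t) sequentially"
    by (rule Weierstrass_m_test[OF _ \<open>summable c\<close>]) (use steps in \<open>auto simp: h_def dist_norm\<close>)
  have telescope: "(\<Sum>i<m. h i t) = g m t - g 0 t" for m t
    unfolding h_def by (rule sum_lessThan_telescope)
  define L where "L t = (\<Sum>i. h i t) + g 0 t" for t
  have "continuous_on {0..1} (\<lambda>t. \<Sum>i. h i t)"
  proof (rule uniform_limit_theorem[OF _ ul])
    show "\<forall>\<^sub>F m in sequentially. continuous_on {0..1} (\<lambda>t. \<Sum>i<m. h i t)"
      unfolding telescope using paths
      by (intro always_eventually allI continuous_intros) (auto simp: path_def)
  qed simp
  then have "path L"
    unfolding L_def path_def using paths by (intro continuous_intros) (auto simp: path_def)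
  moreover have "(\<lambda>m. g m t) \<longlonglongrightarrow> L t" if "t \<in> {0..1}" for t
  proof -
    have "(\<lambda>m. \<Sum>i<m. h i t) \<longlonglongrightarrow> (\<Sum>i. h i t)"
      using uniform_limit_on_subset[OF ul, of "{t}"] that by simp
    then have "(\<lambda>m. (\<Sum>i<m. h i t) + g 0 t) \<longlonglongrightarrow> L t"
      unfolding L_def by (intro tendsto_add tendsto_const)
    then show ?thesis
      unfolding telescope by simp
  qed
  ultimately show ?thesis
    using that by blast
qed

lemma limit_in_closed_of_close_points:
  fixes g :: "nat \<Rightarrow> 'b::real_normed_vector"
  assumes "closed Y" "g \<longlonglongrightarrow> l" "\<And>m. x m \<in> Y" "\<And>m. dist (g m) (x m) \<le> c m" "c \<longlonglongrightarrow> 0"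
  shows "l \<in> Y"
proof -
  have "\<forall>m. norm (x m - g m) \<le> c m"
  proof
    fix m
    show "norm (x m - g m) \<le> c m"
      using assms(4)[of m] dist_norm[of "x m" "g m"] dist_commute[of "x m" "g m"] by linarith
  qed
  then have "(\<lambda>m. x m - g m) \<longlonglongrightarrow> 0"
    by (rule Lim_null_comparison[OF always_eventually assms(5)])
  then have "(\<lambda>m. (x m - g m) + g m) \<longlonglongrightarrow> 0 + l"
    using assms(2) by (rule tendsto_add)
  then have lim: "x \<longlonglongrightarrow> l"
    by simp
  show ?thesis
    by (rule Lim_in_closed_set[OF assms(1) _ trivial_limit_sequentially lim]) (simp add: assms(3))
qed

lemma path_of_chain_refinement:
  fixes Y :: "'b::banach set"
  assumes "chain_refinement Y ch \<delta> (\<lambda>n. e / 2 ^ n)" and "closed Y" "e > 0"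
    and yz: "y \<in> Y" "z \<in> Y" "dist y z < \<delta> 0"
  obtains g where "path g" "pathstart g = y" "pathfinish g = z" "path_image g \<subseteq> Y"
    "path_image g \<subseteq> cball y (5 * e)"
proof -
  interpret chain_refinement Y ch \<delta> "\<lambda>n. e / 2 ^ n"
    by (rule assms(1))
  define g where "g m = refined_path ch m 0 y z" for m
  have gpath: "path (g m)" "pathstart (g m) = y" "pathfinish (g m) = z" for m
    unfolding g_def using path_refined_path[OF yz] by auto
  have "summable (\<lambda>i. (2 * e) * (1/2::real) ^ i)"
    by (intro summable_mult summable_geometric) simp
  then have summable: "summable (\<lambda>i. 2 * (e / 2 ^ i))"
    by (simp add: power_one_over)
  have steps: "dist (g (Suc i) t) (g i t) \<le> 2 * (e / 2 ^ i)" if "t \<in> {0..1}" for i t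
    using refined_path_step[OF yz that, of i] by (simp add: g_def)
  obtain L where L: "path L" and conv: "\<And>t. t \<in> {0..1} \<Longrightarrow> (\<lambda>m. g m t) \<longlonglongrightarrow> L t"
    using path_limit_of_summable_steps[of g, OF gpath(1) summable steps] by blast
  have L01: "L 0 = y" "L 1 = z"
    using conv[of 0] conv[of 1] gpath by (simp_all add: pathstart_def pathfinish_def LIMSEQ_const_iff)
  have LY: "L t \<in> Y" if t: "t \<in> {0..1}" for t
  proof -
    have "\<forall>m. \<exists>x\<in>Y. dist (g m t) x < \<delta> m"
      using refined_path_near[OF yz t] by (simp add: g_def)
    then obtain x where x: "\<And>m. x m \<in> Y" "\<And>m. dist (g m t) (x m) < \<delta> m"
      by metis
    have "(\<lambda>m. e * (1/2::real) ^ m) \<longlonglongrightarrow> e * 0"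
      by (intro tendsto_mult tendsto_const LIMSEQ_realpow_zero) auto
    then have null: "(\<lambda>m. e / 2 ^ m) \<longlonglongrightarrow> 0"
      by (simp add: power_one_over)
    have close: "dist (g m t) (x m) \<le> e / 2 ^ m" for m
      using x(2)[of m] delta_le_epsilon[of m] by linarith
    show ?thesis
      by (rule limit_in_closed_of_close_points[of Y _ _ x, OF \<open>closed Y\<close> conv[OF t] x(1) close null])
  qed
  have Lb: "L t \<in> cball y (5 * e)" if "t \<in> {0..1}" for t
  proof (rule Lim_in_closed_set[OF closed_cball _ _ conv[OF that]])
    have geometric: "(\<Sum>j<m. 2 * (e / 2 ^ j)) = 4 * e - 4 * e / 2 ^ m" for m
      by (induction m) (simp_all add: field_simps)
    show "\<forall>\<^sub>F m in sequentially. g m t \<in> cball y (5 * e)"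
    proof (intro always_eventually allI)
      fix m
      have "dist (g m t) (linepath y z t) \<le> 4 * e"
        using dist_refined_path_linepath[OF yz that, of m] geometric[of m] \<open>e > 0\<close>
        by (simp add: g_def) (smt (verit) divide_pos_pos zero_less_power)
      moreover have "dist (linepath y z t) y \<le> e"
        using dist_linepath_start[OF that, of y z] yz(3) delta_le_epsilon[of 0] by simp
      ultimately show "g m t \<in> cball y (5 * e)"
        using dist_triangle[of "g m t" y "linepath y z t"] by (simp add: dist_commute)
    qed
  qed simp
  show ?thesis
  proof (rule that[of L])
    show "path L"
      by (rule L)
    show "pathstart L = y" "pathfinish L = z"
      using L01 by (simp_all add: pathstart_def pathfinish_def)
    show "path_image L \<subseteq> Y" "path_image L \<subseteq> cball y (5 * e)"
      using LY Lb by (auto simp: path_image_def)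
  qed
qed

lemma banach_small_paths:
  fixes Y :: "'b::banach set"
  assumes "compact Y" "uniformly_locally_connected Y" "e > 0"
  shows "\<exists>d>0. \<forall>y\<in>Y. \<forall>z\<in>Y. dist y z < d \<longrightarrow>
      (\<exists>g. path g \<and> pathstart g = y \<and> pathfinish g = z \<and> path_image g \<subseteq> Y \<and>
          path_image g \<subseteq> cball y (5 * e))"
proof -
  define \<epsilon> where "\<epsilon> n = e / 2 ^ n" for n :: nat
  have "\<exists>d>0. d \<le> \<epsilon> n \<and> (\<forall>y\<in>Y. \<forall>z\<in>Y. dist y z < d \<longrightarrow>
                 (\<exists>C. connected C \<and> C \<subseteq> Y \<and> y \<in> C \<and> z \<in> C \<and> C \<subseteq> ball y (\<epsilon> n)))" for n
  proof -
    have "\<epsilon> n > 0"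
      using \<open>e > 0\<close> by (simp add: \<epsilon>_def)
    then obtain d where "d > 0" and d: "\<forall>y\<in>Y. \<forall>z\<in>Y. dist y z < d \<longrightarrow>
                 (\<exists>C. connected C \<and> C \<subseteq> Y \<and> y \<in> C \<and> z \<in> C \<and> C \<subseteq> ball y (\<epsilon> n))"
      using uniformly_locally_connectedD[OF assms(2) \<open>\<epsilon> n > 0\<close>] by blast
    then show ?thesis
      using \<open>\<epsilon> n > 0\<close> by (intro exI[of _ "min d (\<epsilon> n)"]) auto
  qed
  then obtain \<delta> where \<delta>: "\<And>n. \<delta> n > 0" "\<And>n. \<delta> n \<le> \<epsilon> n"
    "\<And>n y z. y \<in> Y \<Longrightarrow> z \<in> Y \<Longrightarrow> dist y z < \<delta> n \<Longrightarrow>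
                 (\<exists>C. connected C \<and> C \<subseteq> Y \<and> y \<in> C \<and> z \<in> C \<and> C \<subseteq> ball y (\<epsilon> n))"
    by metis
  define good_chain where "good_chain n y z ws \<longleftrightarrow> length ws \<ge> 2 \<and> hd ws = y \<and> last ws = z \<and>
      set ws \<subseteq> Y \<inter> ball y (\<epsilon> n) \<and>
      successively (\<lambda>a b. a \<in> Y \<and> b \<in> Y \<and> dist a b < \<delta> (Suc n)) ws" for n y z ws
  define ch where "ch n y z = (SOME ws. good_chain n y z ws)" for n y z
  have "good_chain n y z (ch n y z)" if yz: "y \<in> Y" "z \<in> Y" "dist y z < \<delta> n" for n y z
  proof -
    obtain C where C: "connected C" "C \<subseteq> Y" "y \<in> C" "z \<in> C" "C \<subseteq> ball y (\<epsilon> n)"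
      using \<delta>(3)[OF yz] by blast
    obtain ws where ws: "length ws \<ge> 2" "hd ws = y" "last ws = z" "set ws \<subseteq> C"
        "successively (\<lambda>a b. dist a b < \<delta> (Suc n)) ws"
      using connected_imp_dist_chain[OF C(1,3,4) \<delta>(1)[of "Suc n"]] by blast
    have "good_chain n y z ws"
      unfolding good_chain_def using ws C by (auto elim!: successively_mono)
    then show ?thesis
      unfolding ch_def by (rule someI)
  qed
  then have refinement: "chain_refinement Y ch \<delta> (\<lambda>n. e / 2 ^ n)"
    by unfold_locales (use \<delta>(2) in \<open>auto simp: good_chain_def \<epsilon>_def\<close>)
  show ?thesis
  proof (intro exI[of _ "\<delta> 0"] conjI ballI impI)
    fix y z assume yz: "y \<in> Y" "z \<in> Y" "dist y z < \<delta> 0"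
    obtain g where "path g" "pathstart g = y" "pathfinish g = z" "path_image g \<subseteq> Y"
        "path_image g \<subseteq> cball y (5 * e)"
      using path_of_chain_refinement[OF refinement compact_imp_closed[OF \<open>compact Y\<close>] \<open>e > 0\<close> yz]
      by blast
    then show "\<exists>g. path g \<and> pathstart g = y \<and> pathfinish g = z \<and> path_image g \<subseteq> Y \<and>
        path_image g \<subseteq> cball y (5 * e)"
      by blast
  qed (rule \<delta>(1))
qed

lemma uniformly_locally_connected_kuratowski_image:
  assumes "uniformly_locally_connected X"
  shows "uniformly_locally_connected (kuratowski ` X)"
  unfolding uniformly_locally_connected_def
proof (intro allI impI)
  fix e :: real assume "e > 0"
  then obtain d where "d > 0" and d: "\<forall>y\<in>X. \<forall>z\<in>X. dist y z < d \<longrightarrow>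
      (\<exists>C. connected C \<and> C \<subseteq> X \<and> y \<in> C \<and> z \<in> C \<and> C \<subseteq> ball y e)"
    using uniformly_locally_connectedD[OF assms \<open>e > 0\<close>] by blast
  show "\<exists>d>0. \<forall>y\<in>kuratowski ` X. \<forall>z\<in>kuratowski ` X. dist y z < d \<longrightarrow>
      (\<exists>C. connected C \<and> C \<subseteq> kuratowski ` X \<and> y \<in> C \<and> z \<in> C \<and> C \<subseteq> ball y e)"
  proof (intro exI[of _ d] conjI ballI impI)
    fix y' z' assume "y' \<in> kuratowski ` X" "z' \<in> kuratowski ` X" "dist y' z' < d"
    then obtain y z where yz: "y \<in> X" "z \<in> X" "y' = kuratowski y" "z' = kuratowski z"
      by blast
    then have "dist y z < d"
      using \<open>dist y' z' < d\<close> by simp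
    then obtain C where C: "connected C" "C \<subseteq> X" "y \<in> C" "z \<in> C" "C \<subseteq> ball y e"
      using d yz(1,2) by blast
    show "\<exists>C. connected C \<and> C \<subseteq> kuratowski ` X \<and> y' \<in> C \<and> z' \<in> C \<and> C \<subseteq> ball y' e"
      using C yz
      by (intro exI[of _ "kuratowski ` C"]) (auto intro: connected_continuous_image continuous_on_kuratowski)
  qed (rule \<open>d > 0\<close>)
qed

lemma compact_locally_connected_small_paths:
  fixes X :: "'a::metric_space set"
  assumes "compact X" "locally connected X" "e > 0"
  shows "\<exists>d>0. \<forall>y\<in>X. \<forall>z\<in>X. dist y z < d \<longrightarrow>
      (\<exists>g. path g \<and> pathstart g = y \<and> pathfinish g = z \<and> path_image g \<subseteq> X \<and>
          path_image g \<subseteq> cball y (5 * e))"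
proof -
  define Y where "Y = kuratowski ` X"
  have cY: "compact Y"
    unfolding Y_def by (rule compact_continuous_image[OF continuous_on_kuratowski assms(1)])
  have ulcY: "uniformly_locally_connected Y"
    unfolding Y_def
    by (rule uniformly_locally_connected_kuratowski_image[OF compact_locally_connected_imp_uniformly_locally_connected[OF assms(1,2)]])
  obtain d where "d > 0" and d: "\<forall>y\<in>Y. \<forall>z\<in>Y. dist y z < d \<longrightarrow>
      (\<exists>g. path g \<and> pathstart g = y \<and> pathfinish g = z \<and> path_image g \<subseteq> Y \<and>
          path_image g \<subseteq> cball y (5 * e))"
    using banach_small_paths[OF cY ulcY assms(3)] by blast
  show ?thesis
  proof (intro exI[of _ d] conjI ballI impI)
    fix y z assume yz: "y \<in> X" "z \<in> X" "dist y z < d"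
    then have "kuratowski y \<in> Y" "kuratowski z \<in> Y" "dist (kuratowski y) (kuratowski z) < d"
      by (auto simp: Y_def)
    then obtain g where g: "path g" "pathstart g = kuratowski y" "pathfinish g = kuratowski z"
        "path_image g \<subseteq> Y" "path_image g \<subseteq> cball (kuratowski y) (5 * e)"
      using d by blast
    have "path (inv kuratowski \<circ> g)"
      using g(1,4) unfolding Y_def
      by (intro path_continuous_image continuous_on_inv_kuratowski) auto
    moreover have "inv kuratowski u \<in> X \<inter> cball y (5 * e)" if u: "u \<in> path_image g" for u
    proof -
      obtain a where "a \<in> X" "u = kuratowski a"
        using g(4) u unfolding Y_def by blast
      moreover have "u \<in> cball (kuratowski y) (5 * e)"
        using g(5) u by blast
      ultimately show ?thesis
        by (simp add: inv_f_f[OF inj_kuratowski])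
    qed
    then have "path_image (inv kuratowski \<circ> g) \<subseteq> X \<inter> cball y (5 * e)"
      unfolding path_image_compose by blast
    ultimately show "\<exists>g. path g \<and> pathstart g = y \<and> pathfinish g = z \<and> path_image g \<subseteq> X \<and>
        path_image g \<subseteq> cball y (5 * e)"
      using g(2,3) by (intro exI[of _ "inv kuratowski \<circ> g"])
        (auto simp: pathstart_compose pathfinish_compose inv_f_f[OF inj_kuratowski])
  qed (rule \<open>d > 0\<close>)
qed

lemma compact_locally_connected_imp_locally_path_connected:
  fixes X :: "'a::metric_space set"
  assumes "compact X" "locally connected X"
  shows "locally path_connected X"
  unfolding locally_path_connected_im_kleinen
proof (intro allI impI, elim conjE)
  fix v x assume v: "openin (top_of_set X) v" and "x \<in> v"
  then obtain r where "r > 0" "ball x r \<inter> X \<subseteq> v"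
    unfolding openin_contains_ball by blast
  have "r / 10 > 0"
    using \<open>r > 0\<close> by simp
  then obtain d where "d > 0" and d: "\<forall>y\<in>X. \<forall>z\<in>X. dist y z < d \<longrightarrow>
      (\<exists>g. path g \<and> pathstart g = y \<and> pathfinish g = z \<and> path_image g \<subseteq> X \<and>
          path_image g \<subseteq> cball y (5 * (r / 10)))"
    using compact_locally_connected_small_paths[OF assms \<open>r / 10 > 0\<close>] by blast
  have xX: "x \<in> X"
    using v \<open>x \<in> v\<close> openin_imp_subset by blast
  show "\<exists>u. openin (top_of_set X) u \<and> x \<in> u \<and> u \<subseteq> v \<and>
           (\<forall>y. y \<in> u \<longrightarrow> (\<exists>p. path p \<and> path_image p \<subseteq> v \<and> pathstart p = x \<and> pathfinish p = y))"
  proof (intro exI[of _ "X \<inter> ball x (min d r)"] conjI allI impI)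
    show "openin (top_of_set X) (X \<inter> ball x (min d r))"
      by (simp add: openin_open_Int)
    show "x \<in> X \<inter> ball x (min d r)"
      using xX \<open>d > 0\<close> \<open>r > 0\<close> by simp
    show "X \<inter> ball x (min d r) \<subseteq> v"
      using \<open>ball x r \<inter> X \<subseteq> v\<close> by auto
    fix y assume "y \<in> X \<inter> ball x (min d r)"
    then have "y \<in> X" "dist x y < d"
      by auto
    then obtain g where g: "path g" "pathstart g = x" "pathfinish g = y" "path_image g \<subseteq> X"
        "path_image g \<subseteq> cball x (5 * (r / 10))"
      using d xX by blast
    then have "path_image g \<subseteq> v"
      using \<open>ball x r \<inter> X \<subseteq> v\<close> \<open>r > 0\<close> by (auto simp: subset_iff)
    then show "\<exists>p. path p \<and> path_image p \<subseteq> v \<and> pathstart p = x \<and> pathfinish p = y"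
      using g by blast
  qed
qed

lemma path_contains_arc_metric:
  fixes p :: "real \<Rightarrow> 'a::metric_space"
  assumes "path p" "pathstart p = a" "pathfinish p = b" "a \<noteq> b"
  obtains q where "arc q" "path_image q \<subseteq> path_image p" "pathstart q = a" "pathfinish q = b"
proof -
  have "path (kuratowski \<circ> p)"
    by (rule path_continuous_image[OF assms(1) continuous_on_kuratowski])
  moreover have "pathstart (kuratowski \<circ> p) = kuratowski a" "pathfinish (kuratowski \<circ> p) = kuratowski b"
    "kuratowski a \<noteq> kuratowski b"
    using assms(2-4) by (auto simp: pathstart_compose pathfinish_compose dest: injD[OF inj_kuratowski])
  ultimately obtain q where q: "arc q" "path_image q \<subseteq> path_image (kuratowski \<circ> p)"
      "pathstart q = kuratowski a" "pathfinish q = kuratowski b"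
    by (rule path_contains_arc)
  have sub: "path_image q \<subseteq> range kuratowski"
    using q(2) by (auto simp: path_image_compose)
  have "arc (inv kuratowski \<circ> q)"
    unfolding arc_def
  proof
    show "path (inv kuratowski \<circ> q)"
      by (rule path_continuous_image[OF arc_imp_path[OF q(1)] continuous_on_inv_kuratowski[OF sub]])
    have "inj_on (inv kuratowski) (path_image q)"
      using sub by (rule inj_on_inv_into)
    then show "inj_on (inv kuratowski \<circ> q) {0..1}"
      using q(1) by (intro comp_inj_on) (auto simp: arc_def path_image_def)
  qed
  moreover have "path_image (inv kuratowski \<circ> q) \<subseteq> path_image p"
    using q(2) by (auto simp: path_image_compose inv_f_f[OF inj_kuratowski])
  ultimately show ?thesis
    using q(3,4) that by (simp add: pathstart_compose pathfinish_compose inv_f_f[OF inj_kuratowski])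
qed

lemma arc_in_open_connected:
  fixes D :: "'a::metric_space set"
  assumes "compact D" "locally connected D" "openin (top_of_set D) U" "connected U"
    "p \<in> U" "q \<in> U" "p \<noteq> q"
  obtains \<gamma> where "arc \<gamma>" "path_image \<gamma> \<subseteq> U" "pathstart \<gamma> = p" "pathfinish \<gamma> = q"
proof -
  have "locally path_connected U"
    using locally_open_subset[OF compact_locally_connected_imp_locally_path_connected[OF assms(1,2)] assms(3)] .
  then have "path_component_set U p = U"
    using path_component_eq_connected_component_set connected_component_eq_self assms(4,5) by metis
  then obtain g where g: "path g" "path_image g \<subseteq> U" "pathstart g = p" "pathfinish g = q"
    using assms(6) unfolding path_component_def by blast
  obtain \<gamma> where \<gamma>: "arc \<gamma>" "path_image \<gamma> \<subseteq> path_image g" "pathstart \<gamma> = p" "pathfinish \<gamma> = q"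
    using path_contains_arc_metric[OF g(1,3,4) assms(7)] by blast
  have "path_image \<gamma> \<subseteq> U"
    using \<gamma>(2) g(2) by (rule order_trans)
  then show ?thesis
    using that \<gamma>(1,3,4) by blast
qed

section \<open>Arcs in dendrites\<close>

lemma arc_compose_linepath:
  fixes g :: "real \<Rightarrow> 'a::topological_space"
  assumes "arc g" "a \<in> {0..1}" "b \<in> {0..1}" "a \<noteq> b"
  shows "arc (g \<circ> linepath a b)" "pathstart (g \<circ> linepath a b) = g a"
    "pathfinish (g \<circ> linepath a b) = g b" "path_image (g \<circ> linepath a b) = g ` closed_segment a b"
proof -
  have seg: "closed_segment a b \<subseteq> {0..1}"
    using assms(2,3) by (simp add: closed_segment_subset)
  show "arc (g \<circ> linepath a b)"
    unfolding arc_def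
  proof
    show "path (g \<circ> linepath a b)"
      using assms(1) seg
      by (intro path_continuous_image) (auto simp: arc_def path_def intro: continuous_on_subset)
    show "inj_on (g \<circ> linepath a b) {0..1}"
    proof (rule comp_inj_on)
      show "inj_on (linepath a b) {0..1}"
        using arc_linepath[OF assms(4)] by (simp add: arc_def)
      have "linepath a b ` {0..1} = closed_segment a b"
        using path_image_linepath by (simp add: path_image_def)
      then show "inj_on g (linepath a b ` {0..1})"
        using assms(1) seg by (auto simp: arc_def intro: inj_on_subset)
    qed
  qed
  show "pathstart (g \<circ> linepath a b) = g a" "pathfinish (g \<circ> linepath a b) = g b"
    by (simp_all add: pathstart_compose pathfinish_compose)
  show "path_image (g \<circ> linepath a b) = g ` closed_segment a b"
    by (simp add: path_image_compose)
qed

lemma closed_gap_around: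
  fixes S :: "real set"
  assumes "closed S" "0 \<in> S" "1 \<in> S" "t \<in> {0..1}" "t \<notin> S"
  obtains t1 t2 where "t1 \<in> S" "t2 \<in> S" "0 \<le> t1" "t1 < t" "t < t2" "t2 \<le> 1"
    "\<And>u. t1 < u \<Longrightarrow> u < t2 \<Longrightarrow> u \<notin> S"
proof -
  define t1 where "t1 = Sup (S \<inter> {0..t})"
  define t2 where "t2 = Inf (S \<inter> {t..1})"
  have t1S: "t1 \<in> S \<inter> {0..t}"
    unfolding t1_def using assms
    by (intro closed_contains_Sup) (auto intro: closed_Int bdd_aboveI[of _ t])
  have t2S: "t2 \<in> S \<inter> {t..1}"
    unfolding t2_def using assms
    by (intro closed_contains_Inf) (auto intro: closed_Int bdd_belowI[of _ t])
  have gap: "u \<notin> S" if "t1 < u" "u < t2" for u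
  proof
    assume "u \<in> S"
    show False
    proof (cases "u \<le> t")
      case True
      then have "u \<le> t1"
        unfolding t1_def using \<open>u \<in> S\<close> \<open>t1 < u\<close> t1S
        by (intro cSup_upper) (auto intro: bdd_aboveI[of _ t])
      then show False
        using \<open>t1 < u\<close> by simp
    next
      case False
      then have "t2 \<le> u"
        unfolding t2_def using \<open>u \<in> S\<close> \<open>u < t2\<close> t2S
        by (intro cInf_lower) (auto intro: bdd_belowI[of _ t])
      then show False
        using \<open>u < t2\<close> by simp
    qed
  qed
  have "t1 \<noteq> t" "t2 \<noteq> t"
    using t1S t2S assms(5) by auto
  show ?thesis
  proof (rule that)
    show "t1 \<in> S" "0 \<le> t1" "t1 < t" "t2 \<in> S" "t < t2" "t2 \<le> 1"
      using t1S t2S \<open>t1 \<noteq> t\<close> \<open>t2 \<noteq> t\<close> by auto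
  qed (use gap in blast)
qed

lemma simple_closed_curve_across_gap:
  fixes \<gamma> \<delta> :: "real \<Rightarrow> 'a::t2_space"
  assumes g: "arc \<gamma>" and d: "arc \<delta>"
    and t: "0 \<le> t1" "t1 < t2" "t2 \<le> 1" and s: "s1 \<in> {0..1}" "s2 \<in> {0..1}"
    and ends: "\<delta> s1 = \<gamma> t1" "\<delta> s2 = \<gamma> t2"
    and gap: "\<And>u. t1 < u \<Longrightarrow> u < t2 \<Longrightarrow> \<gamma> u \<notin> path_image \<delta>"
  obtains C where "simple_closed_curve C" "C \<subseteq> path_image \<gamma> \<union> path_image \<delta>"
proof -
  have t01: "t1 \<in> {0..1}" "t2 \<in> {0..1}" "t1 \<noteq> t2"
    using t by auto
  then have "\<gamma> t1 \<noteq> \<gamma> t2"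
    using g by (auto simp: arc_def dest: inj_onD)
  then have "s2 \<noteq> s1"
    using ends by auto
  define \<alpha> where "\<alpha> = \<gamma> \<circ> linepath t1 t2"
  define \<beta> where "\<beta> = \<delta> \<circ> linepath s2 s1"
  note A = arc_compose_linepath[OF g t01, folded \<alpha>_def]
  note B = arc_compose_linepath[OF d s(2,1) \<open>s2 \<noteq> s1\<close>, folded \<beta>_def]
  have "path_image \<alpha> \<subseteq> path_image \<gamma>" "path_image \<beta> \<subseteq> path_image \<delta>"
    using A(4) B(4) t01 s closed_segment_subset[of t1 "{0..1}" t2] closed_segment_subset[of s2 "{0..1}" s1]
    by (auto simp: path_image_def)
  have "simple_path (\<alpha> +++ \<beta>)"
  proof (rule simple_path_join_loop)
    show "arc \<alpha>" "arc \<beta>" "pathfinish \<alpha> = pathstart \<beta>" "pathfinish \<beta> = pathstart \<alpha>"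
      using A B ends by auto
    show "path_image \<alpha> \<inter> path_image \<beta> \<subseteq> {pathstart \<alpha>, pathstart \<beta>}"
    proof
      fix w assume w: "w \<in> path_image \<alpha> \<inter> path_image \<beta>"
      then obtain u where u: "u \<in> {t1..t2}" "w = \<gamma> u"
        using A t by (auto simp: closed_segment_eq_real_ivl)
      have "w \<in> path_image \<delta>"
        using w \<open>path_image \<beta> \<subseteq> path_image \<delta>\<close> by blast
      then have "u = t1 \<or> u = t2"
        using gap[of u] u by (cases "t1 < u \<and> u < t2") auto
      then show "w \<in> {pathstart \<alpha>, pathstart \<beta>}"
        using u A B ends by auto
    qed
  qed
  moreover have "pathfinish (\<alpha> +++ \<beta>) = pathstart (\<alpha> +++ \<beta>)"
    using A B ends by simp
  ultimately have "simple_closed_curve (path_image (\<alpha> +++ \<beta>))"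
    unfolding simple_closed_curve_def by (intro homeomorphic_simple_path_image_circle) auto
  moreover have "path_image (\<alpha> +++ \<beta>) \<subseteq> path_image \<gamma> \<union> path_image \<delta>"
    using path_image_join_subset \<open>path_image \<alpha> \<subseteq> path_image \<gamma>\<close> \<open>path_image \<beta> \<subseteq> path_image \<delta>\<close>
    by blast
  ultimately show ?thesis
    using that by blast
qed

text \<open>
  Where \<open>\<gamma>\<close> leaves the image of \<open>\<delta>\<close>, the piece of \<open>\<gamma>\<close> between its last exit and first
  re-entry, closed up by the piece of \<open>\<delta>\<close> between these points, is a simple closed curve.
\<close>

lemma simple_closed_curve_in_two_arcs:
  fixes \<gamma> \<delta> :: "real \<Rightarrow> 'a::t2_space"
  assumes g: "arc \<gamma>" and d: "arc \<delta>"
    and ends: "pathstart \<delta> = pathstart \<gamma>" "pathfinish \<delta> = pathfinish \<gamma>"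
    and "\<not> path_image \<gamma> \<subseteq> path_image \<delta>"
  obtains C where "simple_closed_curve C" "C \<subseteq> path_image \<gamma> \<union> path_image \<delta>"
proof -
  obtain t where t: "t \<in> {0..1}" "\<gamma> t \<notin> path_image \<delta>"
    using assms(5) unfolding path_image_def by blast
  define S where "S = {0..1} \<inter> \<gamma> -` path_image \<delta>"
  have "closed (path_image \<delta>)"
    using d by (simp add: arc_imp_path compact_imp_closed compact_path_image)
  then have "closed S"
    unfolding S_def using g by (intro continuous_closed_preimage) (auto simp: arc_def path_def)
  moreover have "0 \<in> S" "1 \<in> S"
    using ends pathstart_in_path_image[of \<delta>] pathfinish_in_path_image[of \<delta>]
    by (auto simp: S_def pathstart_def pathfinish_def)
  moreover have "t \<notin> S"
    using t by (simp add: S_def)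
  ultimately obtain t1 t2 where t12: "t1 \<in> S" "t2 \<in> S" "0 \<le> t1" "t1 < t" "t < t2" "t2 \<le> 1"
      and gap: "\<And>u. t1 < u \<Longrightarrow> u < t2 \<Longrightarrow> u \<notin> S"
    using closed_gap_around[OF _ _ _ t(1)] by blast
  obtain s1 s2 where s: "s1 \<in> {0..1}" "\<delta> s1 = \<gamma> t1" "s2 \<in> {0..1}" "\<delta> s2 = \<gamma> t2"
    using t12(1,2) unfolding S_def path_image_def by auto
  have outside: "\<gamma> u \<notin> path_image \<delta>" if "t1 < u" "u < t2" for u
    using gap[OF that] that t12 by (simp add: S_def)
  have "t1 < t2"
    using t12(4,5) by linarith
  show ?thesis
    using simple_closed_curve_across_gap[OF g d t12(3) \<open>t1 < t2\<close> t12(6) s(1,3,2,4) outside] that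
    by blast
qed

lemma dendrite_arc_subset_connected:
  fixes D :: "'a::metric_space set"
  assumes "dendrite D" and g: "arc \<gamma>" "path_image \<gamma> \<subseteq> D"
    and K: "connected K" "K \<subseteq> D" "pathstart \<gamma> \<in> K" "pathfinish \<gamma> \<in> K"
  shows "path_image \<gamma> \<subseteq> K"
proof (rule ccontr)
  assume "\<not> path_image \<gamma> \<subseteq> K"
  then obtain z where z: "z \<in> path_image \<gamma>" "z \<notin> K"
    by blast
  have "compact D" "locally connected D" and no_curve: "\<nexists>C. C \<subseteq> D \<and> simple_closed_curve C"
    using assms(1) by (auto simp: dendrite_def continuum_def)
  define p q where "p = pathstart \<gamma>" and "q = pathfinish \<gamma>"
  define U where "U = connected_component_set (D - {z}) p"
  have "openin (top_of_set D) (D - {z})"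
    by (metis Diff_eq closed_singleton open_Compl openin_open_Int)
  moreover have "p \<in> D - {z}"
    using K z p_def by auto
  ultimately have "openin (top_of_set D) U"
    unfolding U_def using locally_connected_2[OF \<open>locally connected D\<close>] by blast
  obtain \<delta> where d: "arc \<delta>" "path_image \<delta> \<subseteq> U" "pathstart \<delta> = p" "pathfinish \<delta> = q"
  proof (rule arc_in_open_connected[OF \<open>compact D\<close> \<open>locally connected D\<close> \<open>openin (top_of_set D) U\<close>])
    have "K \<subseteq> U"
      unfolding U_def using K z p_def by (intro connected_component_maximal) auto
    then show "connected U" "p \<in> U" "q \<in> U"
      using K p_def q_def by (auto simp: U_def)
    show "p \<noteq> q"
      using arc_distinct_ends[OF g(1)] by (simp add: p_def q_def)
  qed
  have "path_image \<delta> \<subseteq> D - {z}"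
    using d(2) connected_component_subset unfolding U_def by blast
  then have "\<not> path_image \<gamma> \<subseteq> path_image \<delta>"
    using z by blast
  then obtain C where C: "simple_closed_curve C" "C \<subseteq> path_image \<gamma> \<union> path_image \<delta>"
    using simple_closed_curve_in_two_arcs[OF g(1) d(1) d(3)[unfolded p_def] d(4)[unfolded q_def]] by blast
  have "C \<subseteq> D"
    using C(2) g(2) \<open>path_image \<delta> \<subseteq> D - {z}\<close> by blast
  then show False
    using no_curve C(1) by blast
qed

text \<open>In a dendrite, \<open>arc_between D x y\<close> is the unique arc from \<open>x\<close> to \<open>y\<close> (\<open>{x}\<close> if \<open>x = y\<close>).\<close>

definition arc_between :: "'a::metric_space set \<Rightarrow> 'a \<Rightarrow> 'a \<Rightarrow> 'a set" where
  "arc_between D x y = \<Inter>{K. K \<subseteq> D \<and> connected K \<and> x \<in> K \<and> y \<in> K}"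

definition arc_convex :: "'a::metric_space set \<Rightarrow> 'a set \<Rightarrow> bool" where
  "arc_convex D S \<longleftrightarrow> S \<subseteq> D \<and> (\<forall>x\<in>S. \<forall>y\<in>S. arc_between D x y \<subseteq> S)"

lemma arc_between_minimal:
  "K \<subseteq> D \<Longrightarrow> connected K \<Longrightarrow> x \<in> K \<Longrightarrow> y \<in> K \<Longrightarrow> arc_between D x y \<subseteq> K"
  unfolding arc_between_def by blast

lemma arc_between_refl:
  assumes "x \<in> D"
  shows "arc_between D x x = {x}"
proof
  show "arc_between D x x \<subseteq> {x}"
    using assms by (intro arc_between_minimal) auto
  show "{x} \<subseteq> arc_between D x x"
    unfolding arc_between_def by blast
qed

lemma arc_between_path_image:
  assumes "dendrite D" "arc \<gamma>" "path_image \<gamma> \<subseteq> D"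
  shows "arc_between D (pathstart \<gamma>) (pathfinish \<gamma>) = path_image \<gamma>"
proof
  show "arc_between D (pathstart \<gamma>) (pathfinish \<gamma>) \<subseteq> path_image \<gamma>"
    using assms by (intro arc_between_minimal) (auto intro: connected_path_image arc_imp_path)
  show "path_image \<gamma> \<subseteq> arc_between D (pathstart \<gamma>) (pathfinish \<gamma>)"
    unfolding arc_between_def
  proof (rule Inter_greatest)
    fix K assume "K \<in> {K. K \<subseteq> D \<and> connected K \<and> pathstart \<gamma> \<in> K \<and> pathfinish \<gamma> \<in> K}"
    then show "path_image \<gamma> \<subseteq> K"
      using dendrite_arc_subset_connected[OF assms] by blast
  qed
qed

lemma dendrite_imp_arc:
  assumes "dendrite D" "x \<in> D" "y \<in> D" "x \<noteq> y"
  obtains \<gamma> where "arc \<gamma>" "path_image \<gamma> \<subseteq> D" "pathstart \<gamma> = x" "pathfinish \<gamma> = y"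
proof -
  have "compact D" "locally connected D" "connected D"
    using assms(1) by (auto simp: dendrite_def continuum_def)
  then show ?thesis
    using arc_in_open_connected[of D D x y] assms that by auto
qed

lemma continuum_arc_between:
  assumes "dendrite D" "x \<in> D" "y \<in> D"
  shows "arc_between D x y \<subseteq> D" "compact (arc_between D x y)" "connected (arc_between D x y)"
    "x \<in> arc_between D x y" "y \<in> arc_between D x y"
proof -
  have "arc_between D x y \<subseteq> D \<and> compact (arc_between D x y) \<and> connected (arc_between D x y) \<and>
      x \<in> arc_between D x y \<and> y \<in> arc_between D x y"
  proof (cases "x = y")
    case True
    then show ?thesis
      using arc_between_refl[OF assms(2)] assms(2) by auto
  next
    case False
    then obtain \<gamma> where g: "arc \<gamma>" "path_image \<gamma> \<subseteq> D" "pathstart \<gamma> = x" "pathfinish \<gamma> = y"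
      using dendrite_imp_arc[OF assms] by blast
    then have "arc_between D x y = path_image \<gamma>"
      using arc_between_path_image[OF assms(1) g(1,2)] by simp
    then show ?thesis
      using g by (auto intro: compact_path_image connected_path_image arc_imp_path)
  qed
  then show "arc_between D x y \<subseteq> D" "compact (arc_between D x y)" "connected (arc_between D x y)"
    "x \<in> arc_between D x y" "y \<in> arc_between D x y"
    by auto
qed

lemma arc_between_subarc:
  assumes "dendrite D" "arc \<gamma>" "path_image \<gamma> \<subseteq> D" "u \<in> {0..1}" "v \<in> {0..1}"
  shows "arc_between D (\<gamma> u) (\<gamma> v) = \<gamma> ` closed_segment u v"
proof (cases "u = v")
  case True
  have "\<gamma> u \<in> D"
    using assms(3,4) by (auto simp: path_image_def)
  then show ?thesis
    using True arc_between_refl by simp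
next
  case False
  note A = arc_compose_linepath[OF assms(2,4,5) False]
  have "path_image (\<gamma> \<circ> linepath u v) \<subseteq> D"
    using A(4) assms(3-5) closed_segment_subset[of u "{0..1}" v] by (auto simp: path_image_def)
  then show ?thesis
    using arc_between_path_image[OF assms(1) A(1)] A by simp
qed

lemma arc_between_mono:
  assumes "dendrite D" "a \<in> D" "z \<in> D" "y \<in> arc_between D a z"
  shows "arc_between D a y \<subseteq> arc_between D a z"
  by (rule arc_between_minimal) (use continuum_arc_between[OF assms(1-3)] assms(4) in auto)

lemma arc_between_antisym:
  assumes "dendrite D" "a \<in> D" "y \<in> D" "x \<in> arc_between D a y" "y \<in> arc_between D a x"
  shows "x = y"
proof (cases "a = y")
  case True
  then show ?thesis
    using assms(4) arc_between_refl[OF assms(2)] by simp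
next
  case False
  then obtain \<gamma> where g: "arc \<gamma>" "path_image \<gamma> \<subseteq> D" "pathstart \<gamma> = a" "pathfinish \<gamma> = y"
    using dendrite_imp_arc[OF assms(1-3)] by blast
  have g01: "\<gamma> 0 = a" "\<gamma> 1 = y"
    using g(3,4) by (simp_all add: pathstart_def pathfinish_def)
  have "x \<in> \<gamma> ` {0..1}"
    using assms(4) arc_between_subarc[OF assms(1) g(1,2), of 0 1] g01 by (simp add: closed_segment_eq_real_ivl)
  then obtain v where v: "v \<in> {0..1}" "x = \<gamma> v"
    by blast
  have "y \<in> \<gamma> ` closed_segment 0 v"
    using assms(5) arc_between_subarc[OF assms(1) g(1,2), of 0 v] v g01 by simp
  then obtain w where w: "w \<in> closed_segment 0 v" "y = \<gamma> w"
    by blast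
  have "w \<in> {0..1}" "w \<le> v"
    using w(1) v(1) by (auto simp: closed_segment_eq_real_ivl)
  moreover have "\<gamma> w = \<gamma> 1"
    using w g01 by simp
  ultimately have "w = 1"
    using g(1) by (auto simp: arc_def dest: inj_onD)
  then show ?thesis
    using \<open>w \<le> v\<close> v g01 by simp
qed

lemma arc_between_subset_Un:
  assumes "dendrite D" "a \<in> D" "b \<in> D" "c \<in> D"
  shows "arc_between D a c \<subseteq> arc_between D a b \<union> arc_between D b c"
proof (rule arc_between_minimal)
  note ab = continuum_arc_between[OF assms(1,2,3)] and bc = continuum_arc_between[OF assms(1,3,4)]
  show "arc_between D a b \<union> arc_between D b c \<subseteq> D"
    using ab bc by auto
  show "connected (arc_between D a b \<union> arc_between D b c)"
    using ab bc by (intro connected_Un) auto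
  show "a \<in> arc_between D a b \<union> arc_between D b c" "c \<in> arc_between D a b \<union> arc_between D b c"
    using ab bc by auto
qed

lemma arc_between_limit:
  fixes D :: "'a::metric_space set"
  assumes "dendrite D" "a \<in> D" and xs: "xs \<longlonglongrightarrow> x" and ys: "ys \<longlonglongrightarrow> y"
    and "\<And>k. ys k \<in> D" "\<And>k. xs k \<in> arc_between D a (ys k)"
  shows "x \<in> arc_between D a y"
proof (rule ccontr)
  assume x: "x \<notin> arc_between D a y"
  have "closed D" "locally connected D"
    using assms(1) by (auto simp: dendrite_def continuum_def compact_imp_closed)
  then have "y \<in> D"
    using assms(5) ys closed_sequential_limits by blast
  note arc_ay = continuum_arc_between[OF assms(1,2) \<open>y \<in> D\<close>]
  define \<rho> where "\<rho> = min (dist x y) (infdist x (arc_between D a y)) / 3"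
  have "infdist x (arc_between D a y) > 0"
    using arc_ay x by (intro infdist_pos_not_in_closed) (auto intro: compact_imp_closed)
  moreover have "x \<noteq> y"
    using x arc_ay by auto
  ultimately have "\<rho> > 0"
    by (simp add: \<rho>_def)
  then obtain V where V: "open V" "y \<in> V" "connected (D \<inter> V)" "D \<inter> V \<subseteq> ball y \<rho>"
    using locally_connected_small_nbhd[OF \<open>locally connected D\<close> \<open>y \<in> D\<close>] by blast
  have "eventually (\<lambda>k. ys k \<in> V) sequentially"
    using ys V(1,2) by (rule topological_tendstoD)
  moreover have "eventually (\<lambda>k. dist (xs k) x < \<rho>) sequentially"
    using xs \<open>\<rho> > 0\<close> by (rule tendstoD)
  ultimately obtain k where k: "ys k \<in> V" "dist (xs k) x < \<rho>"
    using eventually_happens'[OF sequentially_bot] eventually_conj by (metis (mono_tags, lifting))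
  have "arc_between D y (ys k) \<subseteq> D \<inter> V"
    using V k assms(5) \<open>y \<in> D\<close> by (intro arc_between_minimal) auto
  moreover have "xs k \<in> arc_between D a y \<union> arc_between D y (ys k)"
    using arc_between_subset_Un[OF assms(1,2) \<open>y \<in> D\<close> assms(5)] assms(6) by blast
  ultimately have "xs k \<in> arc_between D a y \<or> xs k \<in> ball y \<rho>"
    using V(4) by blast
  moreover have "3 * \<rho> \<le> infdist x (arc_between D a y)" "3 * \<rho> \<le> dist x y"
    by (auto simp: \<rho>_def)
  ultimately show False
    using k(2) \<open>\<rho> > 0\<close> dist_triangle[of x y "xs k"] infdist_le[of "xs k" "arc_between D a y" x]
    by (auto simp: dist_commute)
qed

lemma closed_arc_between_graph:
  fixes K :: "'b::metric_space set"
  assumes "dendrite D" "a \<in> D" "closed K" "continuous_on K g" "continuous_on K h" "g ` K \<subseteq> D"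
  shows "closed {x \<in> K. h x \<in> arc_between D a (g x)}"
  unfolding closed_sequential_limits
proof (intro allI impI, elim conjE)
  fix xs x assume xs: "\<forall>n. xs n \<in> {x \<in> K. h x \<in> arc_between D a (g x)}" "xs \<longlonglongrightarrow> x"
  then have "x \<in> K"
    using assms(3) closed_sequential_limits by blast
  moreover have "(\<lambda>n. g (xs n)) \<longlonglongrightarrow> g x" "(\<lambda>n. h (xs n)) \<longlonglongrightarrow> h x"
    using assms(4,5) xs \<open>x \<in> K\<close> unfolding continuous_on_sequentially by (auto simp: comp_def)
  ultimately show "x \<in> {x \<in> K. h x \<in> arc_between D a (g x)}"
    using arc_between_limit[OF assms(1,2)] xs(1) assms(6) by blast
qed

section \<open>The fixed point property of closed arc-convex subsets\<close>

lemma finite_chain_has_greatest: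
  assumes "finite F" "F \<noteq> {}"
    and total: "\<And>x y. x \<in> F \<Longrightarrow> y \<in> F \<Longrightarrow> le x y \<or> le y x"
    and trans: "\<And>x y z. x \<in> F \<Longrightarrow> y \<in> F \<Longrightarrow> z \<in> F \<Longrightarrow> le x y \<Longrightarrow> le y z \<Longrightarrow> le x z"
  shows "\<exists>m\<in>F. \<forall>c\<in>F. le c m"
  using assms
proof (induction F rule: finite_ne_induct)
  case (insert x F)
  have "\<exists>m\<in>F. \<forall>c\<in>F. le c m"
    by (rule insert.IH) (use insert.prems in blast)+
  then obtain m where m: "m \<in> F" "\<forall>c\<in>F. le c m"
    by blast
  show ?case
  proof (cases "le m x")
    case True
    then have "\<forall>c\<in>insert x F. le c x"
      using m insert.prems by blast
    then show ?thesis
      by blast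
  next
    case False
    then have "le x m"
      using insert.prems m(1) by blast
    then show ?thesis
      using m by blast
  qed
qed blast

lemma compact_chain_has_upper_bound:
  fixes E :: "'a::topological_space set"
  assumes "compact E" "C \<subseteq> E"
    and total: "\<And>x y. x \<in> C \<Longrightarrow> y \<in> C \<Longrightarrow> le x y \<or> le y x"
    and trans: "\<And>x y z. x \<in> E \<Longrightarrow> y \<in> E \<Longrightarrow> z \<in> E \<Longrightarrow> le x y \<Longrightarrow> le y z \<Longrightarrow> le x z"
    and closed_up: "\<And>c. c \<in> E \<Longrightarrow> closed {y \<in> E. le c y}"
    and "E \<noteq> {}"
  shows "\<exists>s\<in>E. \<forall>c\<in>C. le c s"
proof -
  have "E \<inter> (\<Inter>c\<in>C. {y \<in> E. le c y}) \<noteq> {}"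
  proof (rule compact_imp_fip_image[OF \<open>compact E\<close>])
    show "closed {y \<in> E. le c y}" if "c \<in> C" for c
      using that assms(2) closed_up by blast
    fix I assume I: "finite I" "I \<subseteq> C"
    show "E \<inter> (\<Inter>c\<in>I. {y \<in> E. le c y}) \<noteq> {}"
    proof (cases "I = {}")
      case True
      then show ?thesis
        using \<open>E \<noteq> {}\<close> by simp
    next
      case False
      have "\<exists>m\<in>I. \<forall>c\<in>I. le c m"
      proof (rule finite_chain_has_greatest[OF I(1) False])
        show "le x y \<or> le y x" if "x \<in> I" "y \<in> I" for x y
          using that I(2) total by blast
        show "le x z" if "x \<in> I" "y \<in> I" "z \<in> I" "le x y" "le y z" for x y z
          using that I(2) assms(2) trans[of x y z] by blast
      qed
      then obtain m where "m \<in> I" "\<forall>c\<in>I. le c m"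
        by blast
      then have "m \<in> E \<inter> (\<Inter>c\<in>I. {y \<in> E. le c y})"
        using I(2) assms(2) by blast
      then show ?thesis
        by blast
    qed
  qed
  then obtain s where "s \<in> E" "\<forall>c\<in>C. le c s"
    by blast
  then show ?thesis
    by blast
qed

lemma compact_partial_order_has_maximal:
  fixes E :: "'a::topological_space set"
  assumes "compact E" "E \<noteq> {}"
    and refl: "\<And>x. x \<in> E \<Longrightarrow> le x x"
    and trans: "\<And>x y z. x \<in> E \<Longrightarrow> y \<in> E \<Longrightarrow> z \<in> E \<Longrightarrow> le x y \<Longrightarrow> le y z \<Longrightarrow> le x z"
    and antisym: "\<And>x y. x \<in> E \<Longrightarrow> y \<in> E \<Longrightarrow> le x y \<Longrightarrow> le y x \<Longrightarrow> x = y"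
    and closed_up: "\<And>c. c \<in> E \<Longrightarrow> closed {y \<in> E. le c y}"
  shows "\<exists>m\<in>E. \<forall>x\<in>E. le m x \<longrightarrow> x = m"
proof -
  define r where "r = relation_of le E"
  have po: "partial_order_on E r"
    unfolding r_def using refl trans antisym by (rule partial_order_on_relation_ofI)
  then have field: "Field r = E"
    unfolding r_def partial_order_on_def preorder_on_def by (simp add: Field_relation_of)
  have upper_bound: "\<exists>u\<in>Field r. \<forall>c\<in>C. (c, u) \<in> r" if "C \<in> Chains r" for C
  proof -
    have C: "C \<subseteq> E" "\<And>x y. x \<in> C \<Longrightarrow> y \<in> C \<Longrightarrow> le x y \<or> le y x"
      using that by (auto simp: Chains_def r_def relation_of_def)
    from compact_chain_has_upper_bound[OF \<open>compact E\<close> C trans closed_up \<open>E \<noteq> {}\<close>]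
    obtain s where "s \<in> E" "\<forall>c\<in>C. le c s" ..
    then show ?thesis
      using \<open>C \<subseteq> E\<close> field by (auto simp: r_def relation_of_def)
  qed
  have "\<exists>m\<in>Field r. \<forall>x\<in>Field r. (m, x) \<in> r \<longrightarrow> x = m"
    by (rule Zorns_po_lemma[OF _ upper_bound]) (use po field in simp)
  then show ?thesis
    unfolding field by (auto simp: r_def relation_of_def)
qed

text \<open>
  A point \<open>m\<close> on the arc from \<open>a\<close> to \<open>f m \<noteq> m\<close> can be moved a little along that arc to a point \<open>x\<close> that still lies on the arc from \<open>a\<close> to \<open>f x\<close>,
  because \<open>f x\<close> stays in a small connected neighbourhood of \<open>f m\<close> that misses \<open>x\<close>.
\<close>

lemma arc_between_push:
  fixes D :: "'a::metric_space set"
  assumes "dendrite D" "arc_convex D K" "a \<in> K" "continuous_on K f" "f ` K \<subseteq> K"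
    and m: "m \<in> K" "m \<in> arc_between D a (f m)" "f m \<noteq> m"
  obtains x where "x \<in> K" "x \<noteq> m" "m \<in> arc_between D a x" "x \<in> arc_between D a (f x)"
proof -
  have "locally connected D" "K \<subseteq> D"
    using assms(1,2) by (auto simp: dendrite_def arc_convex_def)
  then have aD: "a \<in> D" and fK: "\<And>x. x \<in> K \<Longrightarrow> f x \<in> D"
    using assms(3,5) by auto
  define fm where "fm = f m"
  have fmK: "fm \<in> K"
    using assms(5) m(1) by (auto simp: fm_def)
  have "a \<noteq> fm"
    using m arc_between_refl[OF aD] by (auto simp: fm_def)
  then obtain \<gamma> where g: "arc \<gamma>" "path_image \<gamma> \<subseteq> D" "pathstart \<gamma> = a" "pathfinish \<gamma> = fm"
    using dendrite_imp_arc[OF assms(1) aD] fmK \<open>K \<subseteq> D\<close> by blast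
  have g01: "\<gamma> 0 = a" "\<gamma> 1 = fm"
    using g by (auto simp: pathstart_def pathfinish_def)
  have arc_a: "arc_between D a (\<gamma> t) = \<gamma> ` {0..t}" if "t \<in> {0..1}" for t
    using arc_between_subarc[OF assms(1) g(1,2), of 0 t] that g01 by (simp add: closed_segment_eq_real_ivl)
  obtain s where s: "s \<in> {0..1}" "m = \<gamma> s"
    using m(2) arc_a[of 1] g01 by (auto simp: fm_def)
  have "s \<noteq> 1"
    using s m(3) g01 by (auto simp: fm_def)
  define \<rho> where "\<rho> = dist m fm / 2"
  have "\<rho> > 0"
    using m(3) by (simp add: \<rho>_def fm_def)
  obtain V where V: "open V" "fm \<in> V" "connected (D \<inter> V)" "D \<inter> V \<subseteq> ball fm \<rho>"
    using locally_connected_small_nbhd[OF \<open>locally connected D\<close> fK[OF m(1)] \<open>\<rho> > 0\<close>] fm_def by blast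
  obtain e where e: "e > 0" "ball fm e \<subseteq> V"
    using V(1,2) open_contains_ball by blast
  obtain \<eta> where \<eta>: "\<eta> > 0" "\<And>x. x \<in> K \<Longrightarrow> dist x m < \<eta> \<Longrightarrow> dist (f x) fm < e"
    using assms(4) m(1) e(1) unfolding continuous_on_iff fm_def by blast
  have "continuous_on {0..1} \<gamma>" "min \<eta> \<rho> > 0"
    using g(1) \<eta>(1) \<open>\<rho> > 0\<close> by (simp_all add: arc_def path_def)
  then obtain \<tau> where \<tau>: "\<tau> > 0" "\<And>t. t \<in> {0..1} \<Longrightarrow> dist t s < \<tau> \<Longrightarrow> dist (\<gamma> t) (\<gamma> s) < min \<eta> \<rho>"
    using s(1) unfolding continuous_on_iff by blast
  define t where "t = min 1 (s + \<tau>/2)"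
  have t: "t \<in> {0..1}" "s < t" "dist t s < \<tau>"
    using s(1) \<tau>(1) \<open>s \<noteq> 1\<close> by (auto simp: t_def dist_real_def)
  define x where "x = \<gamma> t"
  have xm: "dist x m < \<eta>" "dist x m < \<rho>"
    using \<tau>(2)[OF t(1,3)] s(2) by (auto simp: x_def)
  have x_arc: "x \<in> arc_between D a fm"
    using arc_a[of 1] t(1) g01 by (auto simp: x_def)
  then have xK: "x \<in> K"
    using assms(2,3) fmK by (auto simp: arc_convex_def)
  have "x \<noteq> m"
    using g(1) t s by (auto simp: x_def arc_def dest: inj_onD)
  moreover have "m \<in> arc_between D a x"
    using arc_a[OF t(1)] s t by (auto simp: x_def)
  moreover have "x \<in> arc_between D a (f x)"
  proof -
    have "f x \<in> D \<inter> V"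
      using \<eta>(2)[OF xK xm(1)] e(2) fK[OF xK] by (auto simp: dist_commute)
    then have "arc_between D (f x) fm \<subseteq> D \<inter> V"
      using V fK[OF m(1)] by (intro arc_between_minimal) (auto simp: fm_def)
    moreover have "x \<notin> ball fm \<rho>"
      using xm(2) dist_triangle[of m fm x] by (auto simp: \<rho>_def dist_commute)
    moreover have "x \<in> arc_between D a (f x) \<union> arc_between D (f x) fm"
      using arc_between_subset_Un[OF assms(1) aD fK[OF xK] fK[OF m(1)]] x_arc by (auto simp: fm_def)
    ultimately show ?thesis
      using V(4) by blast
  qed
  ultimately show ?thesis
    using that xK by blast
qed

theorem arc_convex_fixed_point:
  fixes D :: "'a::metric_space set"
  assumes "dendrite D" "arc_convex D K" "K \<noteq> {}" "closed K" "continuous_on K f" "f ` K \<subseteq> K"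
  shows "\<exists>x\<in>K. f x = x"
proof (rule ccontr)
  assume no_fixed: "\<not> (\<exists>x\<in>K. f x = x)"
  obtain a where "a \<in> K"
    using assms(3) by blast
  have "K \<subseteq> D" "compact D"
    using assms(1,2) by (auto simp: arc_convex_def dendrite_def continuum_def)
  then have aD: "a \<in> D" and fK: "f ` K \<subseteq> D"
    using \<open>a \<in> K\<close> assms(6) by auto
  define E where "E = {x \<in> K. x \<in> arc_between D a (f x)}"
  have ED: "E \<subseteq> D"
    using \<open>K \<subseteq> D\<close> by (auto simp: E_def)
  have "closed E"
    unfolding E_def using assms(1,4,5) aD fK by (intro closed_arc_between_graph) (auto intro: continuous_intros)
  then have "compact E"
    using compact_Int_closed[OF \<open>compact D\<close>] Int_absorb1[OF ED] by metis
  moreover have "a \<in> E"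
    using continuum_arc_between[OF assms(1) aD] fK \<open>a \<in> K\<close> by (auto simp: E_def)
  moreover have "closed {y \<in> E. c \<in> arc_between D a y}" for c
    using assms(1) aD \<open>closed E\<close> ED
    by (intro closed_arc_between_graph) (auto intro: continuous_intros)
  ultimately have "\<exists>m\<in>E. \<forall>x\<in>E. m \<in> arc_between D a x \<longrightarrow> x = m"
  proof (intro compact_partial_order_has_maximal[of E "\<lambda>x y. x \<in> arc_between D a y"])
    show "x \<in> arc_between D a x" if "x \<in> E" for x
      using continuum_arc_between(5)[OF assms(1) aD] that ED by blast
    show "x \<in> arc_between D a z"
      if "x \<in> E" "y \<in> E" "z \<in> E" "x \<in> arc_between D a y" "y \<in> arc_between D a z" for x y z
      using arc_between_mono[OF assms(1) aD, of z y] that ED by blast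
    show "x = y" if "x \<in> E" "y \<in> E" "x \<in> arc_between D a y" "y \<in> arc_between D a x" for x y
      using arc_between_antisym[OF assms(1) aD, of y x] that ED by blast
  qed auto
  then obtain m where m: "m \<in> E" "\<And>x. x \<in> E \<Longrightarrow> m \<in> arc_between D a x \<Longrightarrow> x = m"
    by blast
  then have "m \<in> K" "m \<in> arc_between D a (f m)" "f m \<noteq> m"
    using no_fixed by (auto simp: E_def)
  then obtain x where "x \<in> K" "x \<noteq> m" "m \<in> arc_between D a x" "x \<in> arc_between D a (f x)"
    using arc_between_push[OF assms(1,2) \<open>a \<in> K\<close> assms(5,6)] by blast
  then show False
    using m by (auto simp: E_def)
qed

section \<open>Intersections of arc-convex sets\<close>

lemma connected_imp_arc_convex: "S \<subseteq> D \<Longrightarrow> connected S \<Longrightarrow> arc_convex D S"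
  unfolding arc_convex_def using arc_between_minimal by blast

lemma arc_convex_Int: "arc_convex D A \<Longrightarrow> arc_convex D B \<Longrightarrow> arc_convex D (A \<inter> B)"
  unfolding arc_convex_def by blast

lemma arc_convex_Inter: "\<F> \<noteq> {} \<Longrightarrow> (\<And>S. S \<in> \<F> \<Longrightarrow> arc_convex D S) \<Longrightarrow> arc_convex D (\<Inter>\<F>)"
  unfolding arc_convex_def by blast

lemma arc_convex_imp_connected:
  assumes "dendrite D" "arc_convex D S"
  shows "connected S"
proof (cases "S = {}")
  case False
  then obtain x0 where "x0 \<in> S"
    by blast
  have arcs: "x0 \<in> arc_between D x0 y" "connected (arc_between D x0 y)" "arc_between D x0 y \<subseteq> S"
    "y \<in> arc_between D x0 y" if "y \<in> S" for y
    using continuum_arc_between[OF assms(1), of x0 y] assms(2) \<open>x0 \<in> S\<close> that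
    by (auto simp: arc_convex_def)
  have "S = (\<Union>y\<in>S. arc_between D x0 y)"
  proof
    show "S \<subseteq> (\<Union>y\<in>S. arc_between D x0 y)"
      using arcs(4) by blast
    show "(\<Union>y\<in>S. arc_between D x0 y) \<subseteq> S"
      using arcs(3) by blast
  qed
  also have "connected \<dots>"
  proof (rule connected_Union)
    show "connected T" if "T \<in> arc_between D x0 ` S" for T
      using that arcs(2) by blast
    show "\<Inter> (arc_between D x0 ` S) \<noteq> {}"
      using arcs(1) by blast
  qed
  finally show ?thesis .
qed simp

lemma helly_three_arc_convex:
  assumes "dendrite D" "arc_convex D A" "arc_convex D B" "arc_convex D C"
    and "A \<inter> B \<noteq> {}" "A \<inter> C \<noteq> {}" "B \<inter> C \<noteq> {}"
  shows "A \<inter> B \<inter> C \<noteq> {}"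
proof -
  obtain a b c where abc: "a \<in> B \<inter> C" "b \<in> A \<inter> C" "c \<in> A \<inter> B"
    using assms(5-7) by blast
  then have D: "a \<in> D" "b \<in> D" "c \<in> D"
    using assms(2-4) by (auto simp: arc_convex_def)
  note ab = continuum_arc_between[OF assms(1) D(1,2)]
    and ac = continuum_arc_between[OF assms(1) D(1,3)]
    and cb = continuum_arc_between[OF assms(1) D(3,2)]
  have "arc_between D a b \<inter> arc_between D a c \<inter> arc_between D c b \<noteq> {}"
  proof
    assume "arc_between D a b \<inter> arc_between D a c \<inter> arc_between D c b = {}"
    moreover have "arc_between D a b \<subseteq> arc_between D a c \<union> arc_between D c b"
      by (rule arc_between_subset_Un[OF assms(1) D(1,3,2)])
    ultimately have "\<exists>A B. closed A \<and> closed B \<and> arc_between D a b \<subseteq> A \<union> B \<and>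
        A \<inter> B \<inter> arc_between D a b = {} \<and> A \<inter> arc_between D a b \<noteq> {} \<and> B \<inter> arc_between D a b \<noteq> {}"
      using ab ac cb
      by (intro exI[of _ "arc_between D a c"] exI[of _ "arc_between D c b"]) (auto intro: compact_imp_closed)
    then show False
      using ab(3) unfolding connected_closed by blast
  qed
  then show ?thesis
    using abc assms(2-4) unfolding arc_convex_def by blast
qed

lemma helly_finite_arc_convex:
  assumes "dendrite D" "finite \<G>" "\<G> \<noteq> {}" "\<And>A. A \<in> \<G> \<Longrightarrow> arc_convex D A"
    and "\<And>A B. A \<in> \<G> \<Longrightarrow> B \<in> \<G> \<Longrightarrow> A \<inter> B \<noteq> {}"
  shows "\<Inter>\<G> \<noteq> {}"
  using assms(2-5)
proof (induction "card \<G>" arbitrary: \<G> rule: less_induct)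
  case less
  obtain A where A: "A \<in> \<G>"
    using less.prems(2) by blast
  show ?case
  proof (cases "\<G> = {A}")
    case True
    then show ?thesis
      using less.prems(4)[OF A A] by simp
  next
    case False
    define \<G>' where "\<G>' = (\<lambda>B. A \<inter> B) ` (\<G> - {A})"
    have "card \<G>' \<le> card (\<G> - {A})"
      unfolding \<G>'_def using less.prems(1) by (intro card_image_le) simp
    also have "\<dots> < card \<G>"
      using card_Diff1_less[OF less.prems(1) A] .
    finally have "card \<G>' < card \<G>" .
    moreover have "\<Inter>\<G>' \<noteq> {}"
    proof (rule less.hyps)
      show "card \<G>' < card \<G>" by fact
      show "finite \<G>'" "\<G>' \<noteq> {}"
        unfolding \<G>'_def using less.prems(1,2) A False by auto
      show "arc_convex D X" if "X \<in> \<G>'" for X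
        using that less.prems(3) A unfolding \<G>'_def by (auto intro: arc_convex_Int)
      show "X \<inter> Y \<noteq> {}" if XY: "X \<in> \<G>'" "Y \<in> \<G>'" for X Y
      proof -
        obtain B C where BC: "B \<in> \<G>" "C \<in> \<G>" "X = A \<inter> B" "Y = A \<inter> C"
          using XY unfolding \<G>'_def by blast
        have "A \<inter> B \<inter> C \<noteq> {}"
          using helly_three_arc_convex[OF assms(1) less.prems(3)[OF A] less.prems(3)[OF BC(1)]
              less.prems(3)[OF BC(2)]] less.prems(4) A BC(1,2) by blast
        then show ?thesis
          using BC(3,4) by blast
      qed
    qed
    moreover have "\<Inter>\<G>' = \<Inter>\<G>"
      unfolding \<G>'_def using A False less.prems(2) by blast
    ultimately show ?thesis
      by simp
  qed
qed

lemma helly_compact_arc_convex: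
  assumes "dendrite D" "\<F> \<noteq> {}" "\<And>A. A \<in> \<F> \<Longrightarrow> compact A \<and> arc_convex D A"
    and "\<And>A B. A \<in> \<F> \<Longrightarrow> B \<in> \<F> \<Longrightarrow> A \<inter> B \<noteq> {}"
  shows "\<Inter>\<F> \<noteq> {}"
proof -
  obtain S0 where "S0 \<in> \<F>"
    using assms(2) by blast
  have "S0 \<inter> \<Inter>\<F> \<noteq> {}"
  proof (rule compact_imp_fip)
    show "compact S0" "\<And>T. T \<in> \<F> \<Longrightarrow> closed T"
      using assms(3) \<open>S0 \<in> \<F>\<close> by (auto intro: compact_imp_closed)
    show "S0 \<inter> \<Inter>\<G> \<noteq> {}" if "finite \<G>" "\<G> \<subseteq> \<F>" for \<G>
    proof -
      have "\<Inter>(insert S0 \<G>) \<noteq> {}"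
        using that assms(3,4) \<open>S0 \<in> \<F>\<close>
        by (intro helly_finite_arc_convex[OF assms(1)]) (auto simp: subset_iff)
      then show ?thesis
        by simp
    qed
  qed
  then show ?thesis
    by blast
qed

section \<open>Invariant subdendrites\<close>

lemma compact_Inter_t2:
  fixes \<F> :: "'a::t2_space set set"
  assumes "\<F> \<noteq> {}" "\<And>S. S \<in> \<F> \<Longrightarrow> compact S"
  shows "compact (\<Inter>\<F>)"
proof -
  obtain S0 where "S0 \<in> \<F>"
    using assms(1) by blast
  have "closed (\<Inter>\<F>)"
    by (rule closed_Inter) (use assms(2) compact_imp_closed in blast)
  then have "compact (S0 \<inter> \<Inter>\<F>)"
    using assms(2)[OF \<open>S0 \<in> \<F>\<close>] by (rule compact_Int_closed[rotated])
  moreover have "S0 \<inter> \<Inter>\<F> = \<Inter>\<F>"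
    using \<open>S0 \<in> \<F>\<close> by blast
  ultimately show ?thesis
    by simp
qed

lemma image_funpow_subset: "f ` S \<subseteq> S \<Longrightarrow> (f ^^ n) ` S \<subseteq> S"
  by (induction n) (auto simp: image_subset_iff)

lemma invariant_compacts_meet:
  fixes f :: "'a::metric_space \<Rightarrow> 'a"
  assumes "compact S1" "compact S2" "S1 \<noteq> {}" "S2 \<noteq> {}" "f ` S1 \<subseteq> S1" "f ` S2 \<subseteq> S2"
    and "liminf (\<lambda>n. ereal (setdist ((f ^^ n) ` S1) ((f ^^ n) ` S2))) = 0"
  shows "S1 \<inter> S2 \<noteq> {}"
proof
  assume "S1 \<inter> S2 = {}"
  then have "setdist S1 S2 > 0"
    using assms(1-4) by (simp add: setdist_gt_0_compact_closed compact_imp_closed)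
  moreover have "setdist S1 S2 \<le> setdist ((f ^^ n) ` S1) ((f ^^ n) ` S2)" for n
    using image_funpow_subset[OF assms(5), of n] image_funpow_subset[OF assms(6), of n] assms(3,4)
    by (intro setdist_subset_left setdist_subset_right order_trans[OF setdist_subset_left setdist_subset_right])
       auto
  then have "ereal (setdist S1 S2) \<le> liminf (\<lambda>n. ereal (setdist ((f ^^ n) ` S1) ((f ^^ n) ` S2)))"
    by (intro Liminf_bounded always_eventually) auto
  ultimately show False
    using assms(7) by simp
qed

theorem lemma22:
  fixes D :: "'a::metric_space set" and f :: "'a \<Rightarrow> 'a"
  assumes "dendrite D" and "nondegenerate D"
    and "continuous_on D f" and "f ` D \<subseteq> D"
    and "\<And>S1 S2. subdendrite D S1 \<Longrightarrow> nondegenerate S1 \<Longrightarrow>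
                 subdendrite D S2 \<Longrightarrow> nondegenerate S2 \<Longrightarrow>
                 liminf (\<lambda>n. ereal (setdist ((f ^^ n) ` S1) ((f ^^ n) ` S2))) = 0"
    and "\<F> \<noteq> {}"
    and "\<And>S. S \<in> \<F> \<Longrightarrow> subdendrite D S \<and> nondegenerate S \<and> f ` S \<subseteq> S"
  shows "subdendrite D (\<Inter>\<F>) \<and> f ` (\<Inter>\<F>) \<subseteq> \<Inter>\<F> \<and> (\<exists>x\<in>\<Inter>\<F>. f x = x)"
proof -
  have members: "compact S \<and> arc_convex D S" if "S \<in> \<F>" for S
    using assms(7)[OF that] by (auto simp: subdendrite_def continuum_def intro: connected_imp_arc_convex)
  have meet: "S1 \<inter> S2 \<noteq> {}" if "S1 \<in> \<F>" "S2 \<in> \<F>" for S1 S2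
    using invariant_compacts_meet[OF _ _ _ _ _ _ assms(5)] assms(7) that
    by (auto simp: subdendrite_def continuum_def)
  have ne: "\<Inter>\<F> \<noteq> {}"
    using helly_compact_arc_convex[OF assms(1,6) members meet] .
  have convex: "arc_convex D (\<Inter>\<F>)"
    by (rule arc_convex_Inter[OF assms(6)]) (use members in blast)
  have compact: "compact (\<Inter>\<F>)"
    by (rule compact_Inter_t2[OF assms(6)]) (use members in blast)
  have invariant: "f ` (\<Inter>\<F>) \<subseteq> \<Inter>\<F>"
    using assms(7) by blast
  have "\<Inter>\<F> \<subseteq> D"
    using convex by (simp add: arc_convex_def)
  then have "\<exists>x\<in>\<Inter>\<F>. f x = x"
    using arc_convex_fixed_point[OF assms(1) convex ne compact_imp_closed[OF compact]
        continuous_on_subset[OF assms(3)] invariant] by blast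
  moreover have "subdendrite D (\<Inter>\<F>)"
    using \<open>\<Inter>\<F> \<subseteq> D\<close> ne compact arc_convex_imp_connected[OF assms(1) convex]
    by (simp add: subdendrite_def continuum_def)
  ultimately show ?thesis
    using invariant by blast
qed

end
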